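(* Consider a time-varying graph based on continuous time intervals with $n$ nodes and $m$ edges, where the presence of the edges is specified by a total of $\eta$ continuous time intervals. Then it can be represented as a time-varying graph $H=(V,E,T)$ (with $E\subseteq V\times T\times V\times T$), using only spatial and temporal dynamic edges, with $|E|=O(\eta^2)$ dynamic edges.
   Context: A continuous-time-interval TVG consists of nodes and edges, each edge $\{u,v\}$ being present during a finite union of time intervals $(a,b]\subset\mathbb{R}^+$ of non-zero finite length; $\eta$ is the total number of such intervals over all edges. In the discrete model $H=(V,E,T)$, $V$ is a finite node set, $T$ a finite set of time instants, and a dynamic edge $(u,t_a,v,t_b)\in E$ is a directed edge from node $u$ at time $t_a$ to node $v$ at time $t_b$. A spatial edge has the form $(u,t_a,v,t_a)$ with $u\neq v$; a temporal edge has the form $(u,t_a,u,t_b)$ with $t_a\neq t_b$. The representation takes $T$ to be the set of endpoints of all intervals; for each interval $(a,b]$ of an edge $\{u,v\}$, spatial edges connect $u$ and $v$ at the time instants of $T$ in $[a,b]$, and temporal edges connect $u$ (resp. $v$) between successive such time instants, so that the presence of the edge over the whole interval is encoded. *)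

theory Defs
  imports Complex_Main
begin

text \<open>Continuous-time-interval TVG: node set V, edge set Ed of unordered pairs {u,v},
and for each edge a finite set of intervals (a,b], represented by pairs (a,b)
with 0 \<le> a < b.\<close>

definition ctvg :: "nat set \<Rightarrow> nat set set \<Rightarrow> (nat set \<Rightarrow> (real \<times> real) set) \<Rightarrow> bool" where
  "ctvg V Ed I \<longleftrightarrow> finite V \<and> finite Ed \<and>
     (\<forall>e\<in>Ed. \<exists>u v. e = {u, v} \<and> u \<noteq> v \<and> u \<in> V \<and> v \<in> V) \<and>
     (\<forall>e\<in>Ed. finite (I e) \<and> (\<forall>(a, b)\<in>I e. 0 \<le> a \<and> a < b))"

definition eta :: "nat set set \<Rightarrow> (nat set \<Rightarrow> (real \<times> real) set) \<Rightarrow> nat" where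
  "eta Ed I = (\<Sum>e\<in>Ed. card (I e))"

definition time_instants :: "nat set set \<Rightarrow> (nat set \<Rightarrow> (real \<times> real) set) \<Rightarrow> real set" where
  "time_instants Ed I = (\<Union>e\<in>Ed. \<Union>(a, b)\<in>I e. {a, b})"

type_synonym dyn_edge = "nat \<times> real \<times> nat \<times> real"

definition spatial :: "dyn_edge \<Rightarrow> bool" where
  "spatial d \<longleftrightarrow> (case d of (u, ta, v, tb) \<Rightarrow> ta = tb \<and> u \<noteq> v)"

definition temporal :: "dyn_edge \<Rightarrow> bool" where
  "temporal d \<longleftrightarrow> (case d of (u, ta, v, tb) \<Rightarrow> u = v \<and> ta \<noteq> tb)"

definition interval_edges :: "real set \<Rightarrow> nat set \<Rightarrow> real \<Rightarrow> real \<Rightarrow> dyn_edge set" where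
  "interval_edges T e a b =
     {(x, t, y, t) | x y t. x \<in> e \<and> y \<in> e \<and> x \<noteq> y \<and> t \<in> T \<and> a \<le> t \<and> t \<le> b}
   \<union> {(x, t, x, t') | x t t'. x \<in> e \<and> t \<in> T \<and> t' \<in> T \<and> a \<le> t \<and> t < t' \<and> t' \<le> b \<and>
        \<not> (\<exists>s\<in>T. t < s \<and> s < t')}"

definition repr_E :: "nat set set \<Rightarrow> (nat set \<Rightarrow> (real \<times> real) set) \<Rightarrow> dyn_edge set" where
  "repr_E Ed I = (\<Union>e\<in>Ed. \<Union>(a, b)\<in>I e. interval_edges (time_instants Ed I) e a b)"

end

theory Submission
  imports Defs
begin

text \<open>Every instant of T has at most one immediate successor in T. The spatial edges of an
interval are therefore indexed by an ordered pair of endpoints and an instant, and its temporal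
edges by an endpoint and the earlier instant. Hence one interval contributes O(|T|) dynamic
edges, and since |T| \<le> 2\<eta>, the \<eta> intervals contribute O(\<eta>^2) in total.\<close>

lemma immediate_successor_unique:
  fixes t t' t'' :: "'a :: linorder"
  assumes "t' \<in> T" "t < t'" "\<not> (\<exists>s\<in>T. t < s \<and> s < t')"
    and "t'' \<in> T" "t < t''" "\<not> (\<exists>s\<in>T. t < s \<and> s < t'')"
  shows "t' = t''"
  using assms by (metis linorder_neqE)

lemma interval_edges_subset: "interval_edges T e a b \<subseteq> e \<times> T \<times> e \<times> T"
  unfolding interval_edges_def by auto

lemma interval_edges_spatial_or_temporal:
  "d \<in> interval_edges T e a b \<Longrightarrow> spatial d \<or> temporal d"
  unfolding interval_edges_def spatial_def temporal_def by auto

lemma card_interval_edges_le: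
  assumes "finite e" "finite T"
  shows "card (interval_edges T e a b) \<le> (card e ^ 2 + card e) * card T"
proof -
  define S where "S = {(x, t, y, t) | x y t. x \<in> e \<and> y \<in> e \<and> x \<noteq> y \<and> t \<in> T \<and> a \<le> t \<and> t \<le> b}"
  define R where "R = {(x, t, x, t') | x t t'. x \<in> e \<and> t \<in> T \<and> t' \<in> T \<and> a \<le> t \<and> t < t' \<and>
                         t' \<le> b \<and> \<not> (\<exists>s\<in>T. t < s \<and> s < t')}"
  have "S \<subseteq> (\<lambda>(x, y, t). (x, t, y, t)) ` (e \<times> e \<times> T)"
  proof
    fix d assume "d \<in> S"
    then obtain x y t where "d = (x, t, y, t)" "x \<in> e" "y \<in> e" "t \<in> T"
      unfolding S_def by blast
    then show "d \<in> (\<lambda>(x, y, t). (x, t, y, t)) ` (e \<times> e \<times> T)"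
      by (auto intro: image_eqI[where x = "(x, y, t)"])
  qed
  then have "card S \<le> card (e \<times> e \<times> T)"
    using assms by (meson card_image_le finite_SigmaI surj_card_le)
  then have card_S: "card S \<le> card e ^ 2 * card T"
    by (simp add: card_cartesian_product power2_eq_square)
  have "inj_on (\<lambda>(x, t, _, _). (x, t)) R"
  proof (rule inj_onI)
    fix d d' assume "d \<in> R" "d' \<in> R"
      and "(\<lambda>(x, t, _, _). (x, t)) d = (\<lambda>(x, t, _, _). (x, t)) d'"
    then obtain x t t' t'' where "d = (x, t, x, t')" "d' = (x, t, x, t'')"
      and "t' \<in> T" "t < t'" "\<not> (\<exists>s\<in>T. t < s \<and> s < t')"
      and "t'' \<in> T" "t < t''" "\<not> (\<exists>s\<in>T. t < s \<and> s < t'')"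
      unfolding R_def by auto
    then show "d = d'"
      using immediate_successor_unique[of t' T t t''] by simp
  qed
  moreover have "(\<lambda>(x, t, _, _). (x, t)) ` R \<subseteq> e \<times> T"
    unfolding R_def by auto
  ultimately have card_R: "card R \<le> card e * card T"
    using assms card_inj_on_le[of _ R "e \<times> T"] by (simp add: card_cartesian_product)
  have "card (interval_edges T e a b) \<le> card S + card R"
    unfolding interval_edges_def S_def R_def by (rule card_Un_le)
  with card_S card_R show ?thesis
    by (simp add: add_mult_distrib)
qed

lemma card_UN_UN_le:
  assumes "finite A" "\<forall>a\<in>A. finite (B a)"
  shows "card (\<Union>a\<in>A. \<Union>b\<in>B a. C a b) \<le> (\<Sum>a\<in>A. \<Sum>b\<in>B a. card (C a b))"
proof -
  have "card (\<Union>a\<in>A. \<Union>b\<in>B a. C a b) \<le> (\<Sum>a\<in>A. card (\<Union>b\<in>B a. C a b))"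
    using assms(1) by (rule card_UN_le)
  also have "\<dots> \<le> (\<Sum>a\<in>A. \<Sum>b\<in>B a. card (C a b))"
    using assms(2) by (intro sum_mono card_UN_le) auto
  finally show ?thesis .
qed

lemma finite_time_instants:
  assumes "finite Ed" "\<forall>e\<in>Ed. finite (I e)"
  shows "finite (time_instants Ed I)"
  using assms unfolding time_instants_def by auto

lemma card_time_instants_le:
  assumes "finite Ed" "\<forall>e\<in>Ed. finite (I e)"
  shows "card (time_instants Ed I) \<le> 2 * eta Ed I"
proof -
  have "card (time_instants Ed I) \<le> (\<Sum>e\<in>Ed. \<Sum>p\<in>I e. card (case p of (a, b) \<Rightarrow> {a, b}))"
    unfolding time_instants_def using assms by (rule card_UN_UN_le)
  also have "\<dots> \<le> (\<Sum>e\<in>Ed. \<Sum>p\<in>I e. 2)"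
    by (intro sum_mono) (auto simp: card_insert_le_m1)
  finally show ?thesis
    by (simp add: eta_def sum_distrib_left mult.commute)
qed

lemma card_repr_E_le:
  assumes "ctvg V Ed I"
  shows "card (repr_E Ed I) \<le> 6 * eta Ed I * card (time_instants Ed I)"
proof -
  define T where "T = time_instants Ed I"
  have fin: "finite Ed" "\<forall>e\<in>Ed. finite (I e)" and two: "\<forall>e\<in>Ed. card e = 2"
    using assms unfolding ctvg_def by auto
  have "finite T"
    unfolding T_def using fin by (rule finite_time_instants)
  have per_interval: "card (interval_edges T e a b) \<le> 6 * card T" if "e \<in> Ed" for e a b
  proof -
    have "card e = 2" "finite e"
      using two that card_ge_0_finite[of e] by auto
    then show ?thesis
      using card_interval_edges_le[OF _ \<open>finite T\<close>, of e a b] by simp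
  qed
  have "card (repr_E Ed I) \<le> (\<Sum>e\<in>Ed. \<Sum>p\<in>I e. card (case p of (a, b) \<Rightarrow> interval_edges T e a b))"
    unfolding repr_E_def T_def using fin by (rule card_UN_UN_le)
  also have "\<dots> \<le> (\<Sum>e\<in>Ed. \<Sum>p\<in>I e. 6 * card T)"
    by (intro sum_mono) (auto simp: per_interval split: prod.split)
  also have "\<dots> = 6 * eta Ed I * card T"
    by (simp add: eta_def sum_distrib_left mult_ac)
  finally show ?thesis
    unfolding T_def .
qed

theorem proposition1:
  shows "\<exists>c::real. \<forall>V Ed I. ctvg V Ed I \<longrightarrow>
           finite (time_instants Ed I) \<and>
           repr_E Ed I \<subseteq> V \<times> time_instants Ed I \<times> V \<times> time_instants Ed I \<and>
           (\<forall>d\<in>repr_E Ed I. spatial d \<or> temporal d) \<and>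
           finite (repr_E Ed I) \<and>
           real (card (repr_E Ed I)) \<le> c * (real (eta Ed I))^2"
proof (rule exI[of _ 12], intro allI impI)
  fix V Ed I
  assume G: "ctvg V Ed I"
  let ?T = "time_instants Ed I"
  have fin: "finite Ed" "\<forall>e\<in>Ed. finite (I e)" and "finite V" "\<forall>e\<in>Ed. e \<subseteq> V"
    using G unfolding ctvg_def by auto
  have finT: "finite ?T"
    using fin by (rule finite_time_instants)
  have sub: "repr_E Ed I \<subseteq> V \<times> ?T \<times> V \<times> ?T"
    unfolding repr_E_def using \<open>\<forall>e\<in>Ed. e \<subseteq> V\<close> interval_edges_subset by fast
  have kinds: "\<forall>d\<in>repr_E Ed I. spatial d \<or> temporal d"
    unfolding repr_E_def using interval_edges_spatial_or_temporal by blast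
  have fin_repr: "finite (repr_E Ed I)"
    using \<open>finite V\<close> finT by (intro finite_subset[OF sub]) simp
  have "card (repr_E Ed I) \<le> 6 * eta Ed I * (2 * eta Ed I)"
    using card_repr_E_le[OF G] card_time_instants_le[OF fin] by (meson le_trans mult_le_mono2)
  then have "real (card (repr_E Ed I)) \<le> 12 * (real (eta Ed I))^2"
    by (simp add: power2_eq_square flip: of_nat_mult of_nat_le_iff)
  with finT sub kinds fin_repr show "finite ?T \<and> repr_E Ed I \<subseteq> V \<times> ?T \<times> V \<times> ?T \<and>
      (\<forall>d\<in>repr_E Ed I. spatial d \<or> temporal d) \<and> finite (repr_E Ed I) \<and>
      real (card (repr_E Ed I)) \<le> 12 * (real (eta Ed I))^2"
    by blast
qed

end
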